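(* Let $n \ge 1$ and define $\phi_k = -\pi\frac{n+1}{n} + \frac{2\pi k}{n}$ for $k = 1,\dots,n$, $\Phi = (\phi_1,\dots,\phi_n)$, and for a permutation $\sigma$ of $(1,\dots,n)$ let $\Phi_\sigma = (\phi_{\sigma(1)},\dots,\phi_{\sigma(n)})$. Let $$D_n = \{\tau + \Phi_\sigma : \tau \in (-\pi,\pi),\ \sigma \in \Pi_n\} \subset \mathbb{R}^n,$$ where $\tau + \Phi_\sigma = (\tau + \phi_{\sigma(1)},\dots,\tau+\phi_{\sigma(n)})$ and $\Pi_n$ is the set of permutations of $(1,\dots,n)$. Let $\Theta = (\theta_1,\dots,\theta_n)$ with each $\theta_i \in [-\pi,\pi)$. Then a minimizer of $$\hat\Theta \mapsto \sum_{i=1}^n \tfrac12(\theta_i - \hat\theta_i)^2 \quad \text{over } \hat\Theta \in D_n$$ is given by $\hat\theta^\star_i = \tau^\star + \phi_{\sigma^{-1}(i)}$, where $\sigma$ is a permutation such that $\theta_{\sigma(1)} \le \theta_{\sigma(2)} \le \dots \le \theta_{\sigma(n)}$ and $\tau^\star = \frac{1}{n}\sum_{i=1}^n \theta_i$.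
   Context: Angles on the circle are represented by real numbers in $[-\pi,\pi)$; the configuration $\Phi$ is a set of $n$ equally spaced angles, and $D_n$ is the set of all rotated and permuted copies of it (the optimally dispersed ordered configurations of $n$ points on the circle). *)

theory Defs
  imports "HOL-Analysis.Analysis" "HOL-Combinatorics.Permutations"
begin

text \<open>Configurations in R^n are represented as functions nat => real, with the
  coordinates indexed by 1..n and the value 0 outside 1..n.\<close>

definition phi :: "nat \<Rightarrow> nat \<Rightarrow> real" where
  "phi n k = - pi * (real n + 1) / real n + 2 * pi * real k / real n"

definition vec_on :: "nat \<Rightarrow> (nat \<Rightarrow> real) \<Rightarrow> nat \<Rightarrow> real" where
  "vec_on n f = (\<lambda>i. if i \<in> {1..n} then f i else 0)"

definition Dn :: "nat \<Rightarrow> (nat \<Rightarrow> real) set" where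
  "Dn n = {vec_on n (\<lambda>i. tau + phi n (\<sigma> i)) | tau \<sigma>.
              tau \<in> {-pi<..<pi} \<and> \<sigma> permutes {1..n}}"

definition cost :: "nat \<Rightarrow> (nat \<Rightarrow> real) \<Rightarrow> (nat \<Rightarrow> real) \<Rightarrow> real" where
  "cost n \<theta> \<theta>h = (\<Sum>i=1..n. (1/2) * (\<theta> i - \<theta>h i)^2)"

end

theory Submission
  imports Defs
begin

(* Since the phi k sum to zero, expanding the squares writes the cost of tau + Phi_rho as
   a constant, minus the cross term sum_i theta i * phi (rho i), plus n tau^2/2 - tau sum_i theta i.
   The two variable parts decouple: the quadratic in tau is minimised at the mean of the theta i,
   and because phi is increasing, the rearrangement inequality makes the cross term largest when
   rho = inv sigma pairs the sorted theta with the sorted phi.  The mean lies in (-pi, pi) unless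
   every theta i equals -pi. *)

(* Composing p with the transposition that sends p N back to N changes the sum by
   (b N - b m) * (a N - a (p N)) with m = inv p N, a product of two nonnegative factors. *)
lemma rearrangement_fix_last_le:
  fixes a b :: "nat \<Rightarrow> 'a::linordered_idom"
  assumes p: "p permutes {1..N}" and "mono_on {1..N} a" "mono_on {1..N} b" and N: "N \<ge> 1"
  defines "q \<equiv> Transposition.transpose N (p N) \<circ> p"
  shows "(\<Sum>j=1..N. b j * a (p j)) \<le> (\<Sum>j=1..N. b j * a (q j))"
proof -
  define k where "k = p N"
  define m where "m = inv p N"
  have p_m: "p m = N"
    using p by (simp add: m_def permutes_inverses)
  have m_in: "m \<in> {1..N}"
    unfolding m_def by (rule permutes_in_image[OF permutes_inv[OF p], THEN iffD2]) (use N in simp)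
  have k_in: "k \<in> {1..N}"
    unfolding k_def by (rule permutes_in_image[OF p, THEN iffD2]) (use N in simp)
  have q_N: "q N = N" by (simp add: q_def)
  have q_eq: "q j = p j" if "j \<notin> {m, N}" for j
  proof -
    have "p j \<noteq> p m" "p j \<noteq> p N"
      using that permutes_inj[OF p] by (auto simp: inj_eq)
    then show ?thesis by (simp add: q_def p_m)
  qed
  have exchange: "(\<Sum>j\<in>{m, N}. b j * a (q j)) - (\<Sum>j\<in>{m, N}. b j * a (p j))
      = (b N - b m) * (a N - a k)"
  proof (cases "m = N")
    case True
    then show ?thesis using p_m q_N by (simp add: k_def)
  next
    case False
    then have "q m = k" using p_m by (simp add: q_def k_def)
    then show ?thesis using False p_m q_N by (simp add: k_def algebra_simps)
  qed
  have "(b N - b m) * (a N - a k) \<ge> 0"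
    using mono_onD[OF assms(2) k_in] mono_onD[OF assms(3) m_in] m_in k_in by simp
  moreover have "(\<Sum>j\<in>{1..N} - {m, N}. b j * a (q j)) = (\<Sum>j\<in>{1..N} - {m, N}. b j * a (p j))"
    using q_eq by (intro sum.cong) auto
  moreover have split: "sum f {1..N} = sum f ({1..N} - {m, N}) + sum f {m, N}" for f :: "nat \<Rightarrow> 'a"
    using m_in N by (intro sum.subset_diff) auto
  ultimately show ?thesis
    using exchange unfolding split by linarith
qed

lemma rearrangement_sum_le:
  fixes a b :: "nat \<Rightarrow> 'a::linordered_idom"
  assumes "p permutes {1..n}" "mono_on {1..n} a" "mono_on {1..n} b"
  shows "(\<Sum>j=1..n. b j * a (p j)) \<le> (\<Sum>j=1..n. b j * a j)"
  using assms
proof (induction n arbitrary: p)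
  case 0
  then show ?case by simp
next
  case (Suc n)
  define q where "q = Transposition.transpose (Suc n) (p (Suc n)) \<circ> p"
  have "q permutes {1..n}"
    using permutes_insert_lemma[of p "Suc n" "{1..n}"] Suc.prems(1)
    by (simp add: q_def atLeastAtMostSuc_conv)
  moreover have "mono_on {1..n} a" "mono_on {1..n} b"
    using Suc.prems(2,3) by (auto intro: mono_on_subset)
  ultimately have "(\<Sum>j=1..n. b j * a (q j)) \<le> (\<Sum>j=1..n. b j * a j)"
    using Suc.IH by blast
  moreover have "q (Suc n) = Suc n" by (simp add: q_def)
  ultimately have "(\<Sum>j=1..Suc n. b j * a (q j)) \<le> (\<Sum>j=1..Suc n. b j * a j)"
    by simp
  then show ?case
    using rearrangement_fix_last_le[OF Suc.prems] unfolding q_def by fastforce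
qed

lemma sum_mult_permuted_le_sorted:
  fixes \<theta> a :: "nat \<Rightarrow> 'a::linordered_idom"
  assumes "\<sigma> permutes {1..n}" "\<rho> permutes {1..n}"
    and "mono_on {1..n} (\<theta> \<circ> \<sigma>)" "mono_on {1..n} a"
  shows "(\<Sum>i=1..n. \<theta> i * a (\<rho> i)) \<le> (\<Sum>i=1..n. \<theta> i * a (inv \<sigma> i))"
proof -
  have "(\<Sum>i=1..n. \<theta> i * a (\<rho> i)) = (\<Sum>j=1..n. \<theta> (\<sigma> j) * a ((\<rho> \<circ> \<sigma>) j))"
    using sum.permute[OF assms(1), of "\<lambda>i. \<theta> i * a (\<rho> i)"] by simp
  also have "\<dots> \<le> (\<Sum>j=1..n. \<theta> (\<sigma> j) * a j)"
    using rearrangement_sum_le[OF permutes_compose[OF assms(1,2)] assms(4), of "\<theta> \<circ> \<sigma>"] assms(3)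
    by simp
  also have "\<dots> = (\<Sum>i=1..n. \<theta> i * a (inv \<sigma> i))"
    using sum.permute[OF assms(1), of "\<lambda>i. \<theta> i * a (inv \<sigma> i)"] assms(1)
    by (simp add: permutes_inverses)
  finally show ?thesis .
qed

lemma mono_phi: "mono (phi n)"
  by (rule monoI) (simp add: phi_def divide_right_mono)

lemma sum_phi: "(\<Sum>k=1..n. phi n k) = 0"
proof (cases "n = 0")
  case False
  have "(\<Sum>k=1..n. phi n k) = - pi * (real n + 1) + pi * (2 * (\<Sum>k=1..n. real k)) / real n"
    using False by (simp add: phi_def sum_subtractf sum_divide_distrib[symmetric] sum_distrib_left[symmetric])
  also have "\<dots> = 0"
    using False by (simp add: double_gauss_sum_from_Suc_0)
  finally show ?thesis .
qed simp

lemma cost_rotated_permuted: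
  assumes "\<rho> permutes {1..n}"
  shows "cost n \<theta> (vec_on n (\<lambda>i. t + phi n (\<rho> i))) =
     (\<Sum>i=1..n. (\<theta> i)\<^sup>2 + (phi n i)\<^sup>2) / 2 - (\<Sum>i=1..n. \<theta> i * phi n (\<rho> i))
     + (real n * t\<^sup>2 / 2 - t * (\<Sum>i=1..n. \<theta> i))"
proof -
  have "(\<Sum>i=1..n. phi n (\<rho> i)) = 0" and "(\<Sum>i=1..n. (phi n (\<rho> i))\<^sup>2) = (\<Sum>i=1..n. (phi n i)\<^sup>2)"
    using sum.permute[OF assms, of "phi n"] sum.permute[OF assms, of "\<lambda>k. (phi n k)\<^sup>2"] sum_phi[of n]
    by simp_all
  moreover have "cost n \<theta> (vec_on n (\<lambda>i. t + phi n (\<rho> i))) =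
     (\<Sum>i=1..n. ((\<theta> i)\<^sup>2 + (phi n (\<rho> i))\<^sup>2) / 2 - \<theta> i * phi n (\<rho> i)
        + t * phi n (\<rho> i) + (t\<^sup>2 / 2 - t * \<theta> i))"
    unfolding cost_def vec_on_def by (rule sum.cong) (auto simp: power2_eq_square algebra_simps)
  ultimately show ?thesis
    by (simp add: sum.distrib sum_subtractf sum_divide_distrib[symmetric] sum_distrib_left[symmetric])
qed

lemma cost_sorted_at_mean_le:
  fixes \<theta> :: "nat \<Rightarrow> real"
  assumes "\<sigma> permutes {1..n}" "mono_on {1..n} (\<theta> \<circ> \<sigma>)" "\<rho> permutes {1..n}"
  shows "cost n \<theta> (vec_on n (\<lambda>i. (\<Sum>j=1..n. \<theta> j) / real n + phi n (inv \<sigma> i)))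
      \<le> cost n \<theta> (vec_on n (\<lambda>i. t + phi n (\<rho> i)))"
proof -
  define \<tau> where "\<tau> = (\<Sum>j=1..n. \<theta> j) / real n"
  have sum_eq: "(\<Sum>j=1..n. \<theta> j) = real n * \<tau>"
    by (cases "n = 0") (simp_all add: \<tau>_def)
  have "real n * t\<^sup>2 / 2 - t * (real n * \<tau>) - (real n * \<tau>\<^sup>2 / 2 - \<tau> * (real n * \<tau>))
      = real n * (t - \<tau>)\<^sup>2 / 2"
    by (simp add: power2_eq_square algebra_simps)
  moreover have "real n * (t - \<tau>)\<^sup>2 / 2 \<ge> 0" by simp
  ultimately have "real n * \<tau>\<^sup>2 / 2 - \<tau> * (real n * \<tau>) \<le> real n * t\<^sup>2 / 2 - t * (real n * \<tau>)"
    by linarith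
  then have "cost n \<theta> (vec_on n (\<lambda>i. \<tau> + phi n (inv \<sigma> i)))
      \<le> cost n \<theta> (vec_on n (\<lambda>i. t + phi n (\<rho> i)))"
    unfolding cost_rotated_permuted[OF permutes_inv[OF assms(1)]] cost_rotated_permuted[OF assms(3)] sum_eq
    using sum_mult_permuted_le_sorted[OF assms(1,3,2) mono_imp_mono_on[OF mono_phi[of n]]] by linarith
  then show ?thesis by (simp only: \<tau>_def)
qed

lemma mean_in_open_interval:
  fixes \<theta> :: "nat \<Rightarrow> real"
  assumes "\<forall>i\<in>{1..n}. \<theta> i \<in> {a..<b}" and "i\<^sub>0 \<in> {1..n}" "\<theta> i\<^sub>0 \<noteq> a"
  shows "(\<Sum>i=1..n. \<theta> i) / real n \<in> {a<..<b}"
proof -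
  have n_pos: "real n > 0" using assms(2) by simp
  have "(\<Sum>i=1..n. a) < (\<Sum>i=1..n. \<theta> i)"
    using assms by (intro sum_strict_mono_ex1) force+
  moreover have "(\<Sum>i=1..n. \<theta> i) < (\<Sum>i=1..n. b)"
    using assms by (intro sum_strict_mono) auto
  ultimately show ?thesis
    using n_pos by (simp add: field_simps)
qed

theorem lemma3:
  fixes n :: nat and \<theta> :: "nat \<Rightarrow> real" and \<sigma> :: "nat \<Rightarrow> nat"
  assumes "n \<ge> 1"
    and "\<forall>i\<in>{1..n}. \<theta> i \<in> {-pi..<pi}"
    and "\<sigma> permutes {1..n}"
    and "\<forall>i\<in>{1..n}. \<forall>j\<in>{1..n}. i \<le> j \<longrightarrow> \<theta> (\<sigma> i) \<le> \<theta> (\<sigma> j)"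
  shows "(let tau = (\<Sum>i=1..n. \<theta> i) / real n;
              \<theta>s = vec_on n (\<lambda>i. tau + phi n (inv \<sigma> i))
          in (\<forall>\<theta>h\<in>Dn n. cost n \<theta> \<theta>s \<le> cost n \<theta> \<theta>h)
             \<and> (\<theta>s \<in> Dn n \<or> (\<forall>i\<in>{1..n}. \<theta> i = - pi)))"
proof -
  define \<theta>s where "\<theta>s = vec_on n (\<lambda>i. (\<Sum>j=1..n. \<theta> j) / real n + phi n (inv \<sigma> i))"
  have sorted: "mono_on {1..n} (\<theta> \<circ> \<sigma>)"
    using assms(4) by (auto intro: mono_onI)
  have "cost n \<theta> \<theta>s \<le> cost n \<theta> \<theta>h" if "\<theta>h \<in> Dn n" for \<theta>h
    using that cost_sorted_at_mean_le[OF assms(3) sorted] by (auto simp: Dn_def \<theta>s_def)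
  moreover have "\<theta>s \<in> Dn n" if "\<theta> i \<noteq> - pi" "i \<in> {1..n}" for i
    using mean_in_open_interval[OF assms(2) that(2,1)] permutes_inv[OF assms(3)]
    unfolding Dn_def \<theta>s_def by blast
  ultimately show ?thesis
    unfolding Let_def \<theta>s_def[symmetric] by blast
qed

end
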